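(* (i) For every integer $t\ge1$, $\mathrm{rrsat}(n,K_{t+2})=\Omega(n^{3/2})$. (ii) For every integer $t\ge 1$ there is a constant $C_t$ depending only on $t$ such that $\liminf_{n\to\infty}\frac{\mathrm{rrsat}(n,K_{t+2})}{n^{3/2}}\le C_t$.
   Context: All graphs are finite and simple. A graph is regular if all vertices have the same degree. For a graph $F$, $\mathrm{rrsat}(n,F)$ denotes the smallest number of edges of a regular $n$-vertex graph $G$ that contains no copy of $F$ and such that every regular $n$-vertex graph properly containing $G$ (i.e. obtained from $G$ by adding at least one edge on the same vertex set) contains a copy of $F$. $K_r$ denotes the complete graph on $r$ vertices. *)

theory Defs
  imports Complex_Main "HOL-Library.Landau_Symbols" "HOL-Library.Extended_Real"
begin

definition simple_graph :: "nat \<Rightarrow> nat set set \<Rightarrow> bool" where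
  "simple_graph n E \<longleftrightarrow> (\<forall>e\<in>E. e \<subseteq> {0..<n} \<and> card e = 2)"

definition degree :: "nat set set \<Rightarrow> nat \<Rightarrow> nat" where
  "degree E v = card {e\<in>E. v \<in> e}"

definition regular_graph :: "nat \<Rightarrow> nat set set \<Rightarrow> bool" where
  "regular_graph n E \<longleftrightarrow> simple_graph n E \<and> (\<exists>d. \<forall>v<n. degree E v = d)"

definition contains_clique :: "nat \<Rightarrow> nat set set \<Rightarrow> nat \<Rightarrow> bool" where
  "contains_clique n E r \<longleftrightarrow>
     (\<exists>S. S \<subseteq> {0..<n} \<and> card S = r \<and> (\<forall>x\<in>S. \<forall>y\<in>S. x \<noteq> y \<longrightarrow> {x, y} \<in> E))"

definition rrsat_graph :: "nat \<Rightarrow> nat \<Rightarrow> nat set set \<Rightarrow> bool" where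
  "rrsat_graph n r E \<longleftrightarrow> regular_graph n E \<and> \<not> contains_clique n E r \<and>
     (\<forall>E'. regular_graph n E' \<and> E \<subset> E' \<longrightarrow> contains_clique n E' r)"

definition rrsat :: "nat \<Rightarrow> nat \<Rightarrow> nat" where
  "rrsat n r = Min {card E | E. rrsat_graph n r E}"

end

theory Submission
  imports Defs
begin

text \<open>
  Let \<open>E\<close> be a \<open>d\<close>-regular \<open>K\<^sub>r\<close>-free graph on \<open>n\<close> vertices, \<open>r \<ge> 3\<close>, to which
  no edge set can be added keeping it regular and \<open>K\<^sub>r\<close>-free.  If \<open>n\<close> is large compared with
  \<open>d\<^sup>2\<close>, a greedy construction (first disjoint 4-cycles, then insertion of single vertices into
  the cycles) gives a permutation \<open>s\<close> of the vertices with all cycles of length at least 4,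
  such that \<open>s x\<close> is at distance at least 3 from \<open>x\<close> and \<open>s (s x)\<close> is not adjacent to \<open>x\<close>.
  Adding the edges \<open>{x, s x}\<close> yields a \<open>(d + 2)\<close>-regular proper supergraph in which no
  triangle contains a new edge, so it is still \<open>K\<^sub>r\<close>-free.  Hence \<open>n = O(d\<^sup>2)\<close>, and \<open>E\<close> has
  \<open>n d / 2 = \<Omega>(n^(3/2))\<close> edges.

  For even \<open>m\<close> take a hub adjacent to \<open>m\<close> disjoint \<open>t\<close>-cliques \<open>Q\<^sub>k\<close>, join each
  \<open>Q\<^sub>k\<close> completely to an independent set \<open>U\<^sub>k\<close> of size \<open>t (m - 1)\<close>, and join \<open>U\<^sub>2\<^sub>i\<close> completely
  to \<open>U\<^sub>2\<^sub>i\<^sub>+\<^sub>1\<close>.  This graph is \<open>t m\<close>-regular on \<open>N = 1 + t m\<^sup>2\<close> vertices and has clique number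
  \<open>t + 1\<close>.  A regular proper supergraph has larger degree, so it adds an edge from the hub to
  some \<open>u \<in> U\<^sub>k\<close>, and then the hub, \<open>u\<close> and \<open>Q\<^sub>k\<close> form a \<open>K\<^sub>t\<^sub>+\<^sub>2\<close>.  So
  \<open>rrsat(N, t + 2) \<le> N t m / 2 \<le> t N^(3/2) / 2\<close>.
\<close>

lemma simple_graph_edgeE:
  assumes "simple_graph n E" "e \<in> E"
  obtains a b where "e = {a, b}" "a \<noteq> b" "a < n" "b < n"
proof -
  have "e \<subseteq> {0..<n}" "card e = 2" using assms unfolding simple_graph_def by auto
  then show ?thesis using that by (auto simp: card_2_iff)
qed

lemma simple_graph_edgeD:
  assumes "simple_graph n E" "{a, b} \<in> E"
  shows "a \<noteq> b" "a < n" "b < n"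
  using assms unfolding simple_graph_def by (auto simp: card_2_iff doubleton_eq_iff)

lemma finite_simple_graph: "simple_graph n E \<Longrightarrow> finite E"
  unfolding simple_graph_def by (meson PowI finite_Pow_iff finite_atLeastLessThan finite_subset subsetI)

definition neighbours :: "nat set set \<Rightarrow> nat \<Rightarrow> nat set" where
  "neighbours E x = {y. {x, y} \<in> E}"

lemma neighbours_subset: "simple_graph n E \<Longrightarrow> neighbours E x \<subseteq> {..<n}"
  unfolding neighbours_def by (auto dest: simple_graph_edgeD)

lemma finite_neighbours: "simple_graph n E \<Longrightarrow> finite (neighbours E x)"
  by (meson finite_lessThan finite_subset neighbours_subset)

lemma card_neighbours:
  assumes sg: "simple_graph n E"
  shows "card (neighbours E x) = degree E x"
proof -
  have "bij_betw (\<lambda>y. {x, y}) (neighbours E x) {e\<in>E. x \<in> e}"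
  proof (rule bij_betwI')
    fix y z assume "y \<in> neighbours E x" "z \<in> neighbours E x"
    then show "({x, y} = {x, z}) = (y = z)"
      unfolding neighbours_def by (metis doubleton_eq_iff simple_graph_edgeD(1)[OF sg])
  next
    fix e assume e: "e \<in> {e\<in>E. x \<in> e}"
    then obtain a b where "e = {a, b}" using simple_graph_edgeE[OF sg] by blast
    then show "\<exists>y\<in>neighbours E x. e = {x, y}"
      using e unfolding neighbours_def by (auto simp: insert_commute)
  qed (auto simp: neighbours_def)
  then show ?thesis unfolding degree_def by (rule bij_betw_same_card)
qed

lemma sum_degree:
  assumes "simple_graph n E"
  shows "(\<Sum>v<n. degree E v) = 2 * card E"
proof -
  have "(\<Sum>v<n. degree E v) = (\<Sum>v<n. \<Sum>e\<in>E. if v \<in> e then 1 else 0)"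
    unfolding degree_def using finite_simple_graph[OF assms] by (simp add: sum.inter_filter[symmetric])
  also have "\<dots> = (\<Sum>e\<in>E. \<Sum>v<n. if v \<in> e then 1 else 0)"
    by (rule sum.swap)
  also have "\<dots> = (\<Sum>e\<in>E. 2)"
  proof (rule sum.cong)
    fix e assume "e \<in> E"
    then have "e \<subseteq> {..<n}" "card e = 2"
      using assms unfolding simple_graph_def by (auto simp: atLeast0LessThan)
    then show "(\<Sum>v<n. if v \<in> e then 1 else 0) = (2::nat)"
      by (simp add: sum.If_cases inf.absorb2)
  qed simp
  finally show ?thesis by simp
qed

lemma card_edges_regular_graph:
  assumes "simple_graph n E" "\<forall>v<n. degree E v = d"
  shows "2 * card E = n * d"
  using sum_degree[OF assms(1)] assms(2) by simp

lemma degree_Un_disjoint: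
  assumes "finite E" "finite F" "E \<inter> F = {}"
  shows "degree (E \<union> F) v = degree E v + degree F v"
proof -
  have "{e \<in> E \<union> F. v \<in> e} = {e\<in>E. v \<in> e} \<union> {e\<in>F. v \<in> e}" by auto
  then show ?thesis unfolding degree_def using assms by (simp add: card_Un_disjoint disjoint_iff)
qed

lemma contains_clique_mono:
  "contains_clique n E r \<Longrightarrow> E \<subseteq> F \<Longrightarrow> contains_clique n F r"
  unfolding contains_clique_def by blast

definition ball2 :: "nat set set \<Rightarrow> nat \<Rightarrow> nat set" where
  "ball2 E x = insert x (neighbours E x \<union> \<Union> (neighbours E ` neighbours E x))"

lemma mem_ball2_iff:
  "y \<in> ball2 E x \<longleftrightarrow> y = x \<or> {x, y} \<in> E \<or> (\<exists>w. {x, w} \<in> E \<and> {w, y} \<in> E)"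
  unfolding ball2_def neighbours_def by auto

lemma self_in_ball2: "x \<in> ball2 E x"
  by (simp add: mem_ball2_iff)

lemma neighbour_in_ball2: "{x, y} \<in> E \<Longrightarrow> y \<in> ball2 E x"
  by (simp add: mem_ball2_iff)

lemma ball2_sym: "y \<in> ball2 E x \<longleftrightarrow> x \<in> ball2 E y"
  unfolding mem_ball2_iff by (metis insert_commute)

lemma card_ball2_le:
  assumes sg: "simple_graph n E" and deg: "\<forall>v<n. degree E v \<le> d" and x: "x < n"
  shows "card (ball2 E x) \<le> 1 + d + d * d"
proof -
  have fin: "finite (neighbours E y)" for y using finite_neighbours[OF sg] .
  have card_nb: "card (neighbours E y) \<le> d" if "y < n" for y
    using that deg card_neighbours[OF sg] by simp
  have "card (\<Union> (neighbours E ` neighbours E x)) \<le> (\<Sum>y\<in>neighbours E x. card (neighbours E y))"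
    using fin by (rule card_UN_le)
  also have "\<dots> \<le> (\<Sum>y\<in>neighbours E x. d)"
    using card_nb neighbours_subset[OF sg] by (intro sum_mono) blast
  also have "\<dots> \<le> d * d" using card_nb[OF x] by simp
  finally have "card (\<Union> (neighbours E ` neighbours E x)) \<le> d * d" .
  moreover have "card (ball2 E x) \<le> 1 + card (neighbours E x \<union> \<Union> (neighbours E ` neighbours E x))"
    unfolding ball2_def by (simp add: card_insert_le_m1 fin)
  ultimately show ?thesis
    using card_nb[OF x] card_Un_le[of "neighbours E x" "\<Union> (neighbours E ` neighbours E x)"] by linarith
qed

lemma finite_ball2: "simple_graph n E \<Longrightarrow> finite (ball2 E x)"
  unfolding ball2_def using finite_neighbours by blast

section \<open>Saturated graphs\<close>

lemma not_contains_clique_empty: "2 \<le> r \<Longrightarrow> \<not> contains_clique n {} r"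
proof
  assume r: "2 \<le> r" and "contains_clique n {} r"
  then obtain S where S: "card S = r" and "\<forall>x\<in>S. \<forall>y\<in>S. x \<noteq> y \<longrightarrow> {x, y} \<in> ({} :: nat set set)"
    unfolding contains_clique_def by blast
  then have "\<forall>x\<in>S. \<forall>y\<in>S. x = y" by blast
  then have "card S \<le> 1" by (cases "finite S") (simp_all add: card_le_Suc0_iff_eq)
  then show False using S r by simp
qed

lemma rrsat_graph_exists:
  assumes r: "2 \<le> r"
  obtains E where "rrsat_graph n r E"
proof -
  define F where "F = {E. regular_graph n E \<and> \<not> contains_clique n E r}"
  have "F \<subseteq> Pow (Pow {0..<n})" unfolding F_def regular_graph_def simple_graph_def by auto
  then have "finite F" by (rule finite_subset) simp
  moreover have "{} \<in> F"
    unfolding F_def regular_graph_def simple_graph_def degree_def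
    using not_contains_clique_empty[OF r] by simp
  ultimately obtain E where E: "E \<in> F" and maximal: "\<forall>E'\<in>F. E \<subseteq> E' \<longrightarrow> E = E'"
    using finite_has_maximal[of F] by blast
  have "rrsat_graph n r E"
    unfolding rrsat_graph_def using E maximal unfolding F_def by blast
  then show ?thesis by (rule that)
qed

lemma finite_rrsat_cards: "finite {card E | E. rrsat_graph n r E}"
proof -
  have "{card E | E. rrsat_graph n r E} \<subseteq> card ` Pow (Pow {0..<n})"
    unfolding rrsat_graph_def regular_graph_def simple_graph_def by auto
  then show ?thesis by (rule finite_subset) simp
qed

lemma rrsat_le: "rrsat_graph n r E \<Longrightarrow> rrsat n r \<le> card E"
  unfolding rrsat_def by (rule Min_le[OF finite_rrsat_cards]) auto

lemma rrsat_attained: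
  assumes "2 \<le> r"
  obtains E where "rrsat_graph n r E" "rrsat n r = card E"
proof -
  obtain E where "rrsat_graph n r E" using rrsat_graph_exists[OF assms] .
  then have "{card E | E. rrsat_graph n r E} \<noteq> {}" by auto
  then have "rrsat n r \<in> {card E | E. rrsat_graph n r E}"
    unfolding rrsat_def by (rule Min_in[OF finite_rrsat_cards])
  then show ?thesis using that by auto
qed

section \<open>Far permutations\<close>

text \<open>For \<open>W\<close> the whole vertex set, the edges \<open>{x, s x}\<close> form a 2-factor that can be added to
  \<open>E\<close> without creating a triangle through a new edge.\<close>
definition far_permutation :: "nat set set \<Rightarrow> nat set \<Rightarrow> (nat \<Rightarrow> nat) \<Rightarrow> bool" where
  "far_permutation E W s \<longleftrightarrow> s ` W \<subseteq> W \<and> inj_on s W \<and>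
     (\<forall>x\<in>W. s (s x) \<noteq> x \<and> s (s (s x)) \<noteq> x \<and> s x \<notin> ball2 E x \<and> {x, s (s x)} \<notin> E)"

lemma permutation_add_4cycle:
  assumes sW: "s ` W \<subseteq> W" and inj: "inj_on s W" and W: "c1 \<notin> W" "c2 \<notin> W" "c3 \<notin> W" "c4 \<notin> W"
    and distinct: "c1 \<noteq> c2" "c1 \<noteq> c3" "c1 \<noteq> c4" "c2 \<noteq> c3" "c2 \<noteq> c4" "c3 \<noteq> c4"
  defines "s' \<equiv> s(c1 := c2, c2 := c3, c3 := c4, c4 := c1)"
  shows "s' ` (W \<union> {c1, c2, c3, c4}) \<subseteq> W \<union> {c1, c2, c3, c4}" "inj_on s' (W \<union> {c1, c2, c3, c4})"
proof -
  have on_W: "x \<in> W \<Longrightarrow> s' x = s x" for x using W unfolding s'_def by auto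
  show "s' ` (W \<union> {c1, c2, c3, c4}) \<subseteq> W \<union> {c1, c2, c3, c4}" using sW on_W by (auto simp: s'_def)
  show "inj_on s' (W \<union> {c1, c2, c3, c4})"
  proof (rule inj_onI)
    fix x y assume xy: "x \<in> W \<union> {c1, c2, c3, c4}" "y \<in> W \<union> {c1, c2, c3, c4}" "s' x = s' y"
    show "x = y"
    proof (cases "x \<in> W \<and> y \<in> W")
      case True then show ?thesis using xy on_W inj by (auto dest: inj_onD)
    next
      case False
      have "s' z \<in> W \<longleftrightarrow> z \<in> W" if "z \<in> W \<union> {c1, c2, c3, c4}" for z
        using that on_W sW W distinct by (auto simp: s'_def)
      then have "x \<notin> W" "y \<notin> W" using xy False by metis+
      then show ?thesis using xy distinct by (auto simp: s'_def)
    qed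
  qed
qed

lemma far_permutation_add_4cycle:
  assumes s: "far_permutation E W s" and W: "c1 \<notin> W" "c2 \<notin> W" "c3 \<notin> W" "c4 \<notin> W"
    and far: "c2 \<notin> ball2 E c1" "c3 \<notin> ball2 E c1 \<union> ball2 E c2"
      "c4 \<notin> ball2 E c1 \<union> ball2 E c2 \<union> ball2 E c3"
  shows "far_permutation E (W \<union> {c1, c2, c3, c4}) (s(c1 := c2, c2 := c3, c3 := c4, c4 := c1))"
proof -
  let ?s = "s(c1 := c2, c2 := c3, c3 := c4, c4 := c1)"
  have distinct: "c1 \<noteq> c2" "c1 \<noteq> c3" "c1 \<noteq> c4" "c2 \<noteq> c3" "c2 \<noteq> c4" "c3 \<noteq> c4"
    using far self_in_ball2 by blast+
  have "{c1, c3} \<notin> E" "{c2, c4} \<notin> E"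
    using far neighbour_in_ball2 by blast+
  then have far': "c1 \<notin> ball2 E c4" "{c1, c3} \<notin> E" "{c2, c4} \<notin> E" "{c3, c1} \<notin> E" "{c4, c2} \<notin> E"
    using far ball2_sym by (auto simp: insert_commute)
  have sW: "s ` W \<subseteq> W" and inj: "inj_on s W"
    and props: "\<And>x. x \<in> W \<Longrightarrow> s (s x) \<noteq> x \<and> s (s (s x)) \<noteq> x \<and> s x \<notin> ball2 E x \<and> {x, s (s x)} \<notin> E"
    using s unfolding far_permutation_def by auto
  have "?s (?s x) \<noteq> x \<and> ?s (?s (?s x)) \<noteq> x \<and> ?s x \<notin> ball2 E x \<and> {x, ?s (?s x)} \<notin> E"
    if x: "x \<in> W \<union> {c1, c2, c3, c4}" for x
  proof (cases "x \<in> W")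
    case True
    have on_W: "z \<in> W \<Longrightarrow> ?s z = s z" for z using W by auto
    have "s x \<in> W" "s (s x) \<in> W" using True sW by blast+
    then show ?thesis using True on_W props by simp
  next
    case False
    then consider "x = c1" | "x = c2" | "x = c3" | "x = c4" using x by blast
    then show ?thesis using distinct far far' by cases simp_all
  qed
  then show ?thesis
    using permutation_add_4cycle[OF sW inj W distinct] unfolding far_permutation_def by blast
qed

lemma permutation_insert_after:
  assumes sW: "s ` W \<subseteq> W" and inj: "inj_on s W" and a: "a \<in> W" and x: "x \<notin> W"
  shows "s(a := x, x := s a) ` insert x W \<subseteq> insert x W" "inj_on (s(a := x, x := s a)) (insert x W)"
proof -
  have sx: "y \<in> W \<Longrightarrow> s y \<noteq> x" for y using sW x by auto
  have injE: "y \<in> W \<Longrightarrow> z \<in> W \<Longrightarrow> s y = s z \<Longrightarrow> y = z" for y z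
    using inj by (auto dest: inj_onD)
  show "s(a := x, x := s a) ` insert x W \<subseteq> insert x W" using sW a by auto
  show "inj_on (s(a := x, x := s a)) (insert x W)"
  proof (rule inj_onI)
    fix y z assume "y \<in> insert x W" "z \<in> insert x W" "(s(a := x, x := s a)) y = (s(a := x, x := s a)) z"
    then show "y = z" using sx a x injE[of _ a] injE by (auto split: if_splits)
  qed
qed

lemma far_permutation_insert:
  assumes s: "far_permutation E W s" and x: "x \<notin> W" and a: "a \<in> W"
    and far: "x \<notin> ball2 E a" "s a \<notin> ball2 E x" "{x, s (s a)} \<notin> E"
    and pred: "\<forall>b\<in>W. s b = a \<longrightarrow> {b, x} \<notin> E"
  shows "far_permutation E (insert x W) (s(a := x, x := s a))"
proof -
  let ?s = "s(a := x, x := s a)"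
  have image: "s ` W \<subseteq> W" and inj: "inj_on s W"
    and props: "\<And>y. y \<in> W \<Longrightarrow> s (s y) \<noteq> y \<and> s (s (s y)) \<noteq> y \<and> s y \<notin> ball2 E y \<and> {y, s (s y)} \<notin> E"
    using s unfolding far_permutation_def by auto
  have xa: "x \<noteq> a" using x a by auto
  have sW: "y \<in> W \<Longrightarrow> s y \<in> W" for y using image by blast
  have sx: "y \<in> W \<Longrightarrow> s y \<noteq> x" for y using sW x by auto
  have sa: "s a \<noteq> a" "{a, s a} \<notin> E" using props[OF a] self_in_ball2 neighbour_in_ball2 by metis+
  have "?s (?s y) \<noteq> y \<and> ?s (?s (?s y)) \<noteq> y \<and> ?s y \<notin> ball2 E y \<and> {y, ?s (?s y)} \<notin> E"
    if y: "y \<in> insert x W" for y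
  proof -
    consider "y = a" | "y = x" | "y \<in> W" "y \<noteq> a" "s y = a" | "y \<in> W" "y \<noteq> a" "s y \<noteq> a"
      using y by blast
    then show ?thesis
    proof cases
      case 1
      have "?s a = x" "?s x = s a" "?s (s a) = s (s a)" using xa sa(1) sx[OF a] by simp_all
      then show ?thesis using 1 props[OF a] far(1) sa by simp
    next
      case 2
      have "s a \<in> W" "s (s a) \<in> W" using sW a by blast+
      then have "?s x = s a" "?s (s a) = s (s a)" "?s (s (s a)) = s (s (s a))"
        using xa sa(1) props[OF a] sx sW a by simp_all
      then show ?thesis using 2 far(2,3) sx \<open>s a \<in> W\<close> \<open>s (s a) \<in> W\<close> by simp
    next
      case 3
      have "y \<noteq> x" using 3 x by blast
      then have "?s y = a" "?s a = x" "?s x = s a" using 3 xa by simp_all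
      moreover have "s a \<noteq> y" using 3 props[of y] by metis
      ultimately show ?thesis using 3 props[of y] pred \<open>y \<noteq> x\<close> by simp
    next
      case 4
      have "y \<noteq> x" using 4 x by blast
      then have s2: "?s y = s y" "?s (s y) = s (s y)" using 4 sx by simp_all
      have "?s (s (s y)) \<noteq> y"
        using 4 props[of y] sx sW xa \<open>y \<noteq> x\<close> by (cases "s (s y) = a") simp_all
      then show ?thesis using s2 4 props[of y] by simp
    qed
  qed
  then show ?thesis
    using permutation_insert_after[OF image inj a x] unfolding far_permutation_def by blast
qed

lemma exists_vertex_outside_balls:
  assumes sg: "simple_graph n E" and deg: "\<forall>v<n. degree E v \<le> d"
    and W: "finite W" and C: "C \<subseteq> {..<n}" and size: "card W + card C * (1 + d + d * d) < n"
  obtains x where "x < n" "x \<notin> W" "\<forall>c\<in>C. x \<notin> ball2 E c"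
proof -
  let ?B = "W \<union> \<Union> (ball2 E ` C)"
  have fin_C: "finite C" using C finite_subset by blast
  have "card (\<Union> (ball2 E ` C)) \<le> (\<Sum>c\<in>C. card (ball2 E c))"
    using fin_C finite_ball2[OF sg] by (intro card_UN_le)
  also have "\<dots> \<le> card C * (1 + d + d * d)"
    using card_ball2_le[OF sg deg] C by (intro sum_bounded_above[where 'a=nat, simplified]) auto
  finally have "card ?B < n" using size card_Un_le[of W "\<Union> (ball2 E ` C)"] by linarith
  moreover have "finite ?B" using W fin_C finite_ball2[OF sg] by blast
  ultimately have "\<not> {..<n} \<subseteq> ?B" using card_mono[of ?B "{..<n}"] by auto
  then show ?thesis using that by blast
qed

lemma far_permutation_of_4cycles:
  assumes sg: "simple_graph n E" and deg: "\<forall>v<n. degree E v \<le> d"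
  shows "4 * q + 3 * (1 + d + d * d) < n \<Longrightarrow> \<exists>W s. far_permutation E W s \<and> W \<subseteq> {..<n} \<and> card W = 4 * q"
proof (induction q)
  case 0
  have "far_permutation E {} id" unfolding far_permutation_def by simp
  then show ?case by force
next
  case (Suc q)
  let ?D = "1 + d + d * d"
  obtain W s where s: "far_permutation E W s" and W: "W \<subseteq> {..<n}" "card W = 4 * q"
    using Suc by auto
  have fin_W: "finite W" using W(1) finite_subset by blast
  have size: "card W + k * ?D < n" if "k \<le> 3" for k
  proof -
    have "k * ?D \<le> 3 * ?D" using that by (rule mult_le_mono1)
    then show ?thesis using Suc.prems W(2) by simp
  qed
  obtain c1 where c1: "c1 < n" "c1 \<notin> W"
    using exists_vertex_outside_balls[OF sg deg fin_W, of "{}"] size[of 0] by auto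
  obtain c2 where c2: "c2 < n" "c2 \<notin> W" "c2 \<notin> ball2 E c1"
    using exists_vertex_outside_balls[OF sg deg fin_W, of "{c1}"] size[of 1] c1 by auto
  have "card {c1, c2} \<le> 2" by (simp add: card_insert_if)
  then obtain c3 where c3: "c3 < n" "c3 \<notin> W" "c3 \<notin> ball2 E c1 \<union> ball2 E c2"
    using exists_vertex_outside_balls[OF sg deg fin_W, of "{c1, c2}"] size[of "card {c1, c2}"] c1 c2
    by auto
  have "card {c1, c2, c3} \<le> 3" by (simp add: card_insert_if)
  then obtain c4 where c4: "c4 < n" "c4 \<notin> W" "c4 \<notin> ball2 E c1 \<union> ball2 E c2 \<union> ball2 E c3"
    using exists_vertex_outside_balls[OF sg deg fin_W, of "{c1, c2, c3}"] size[of "card {c1, c2, c3}"] c1 c2 c3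
    by auto
  have "c1 \<noteq> c2" "c1 \<noteq> c3" "c1 \<noteq> c4" "c2 \<noteq> c3" "c2 \<noteq> c4" "c3 \<noteq> c4"
    using c2(3) c3(3) c4(3) self_in_ball2 by blast+
  then have "card (W \<union> {c1, c2, c3, c4}) = 4 * Suc q"
    using W(2) fin_W c1 c2 c3 c4 by (simp add: card_insert_if)
  moreover have "W \<union> {c1, c2, c3, c4} \<subseteq> {..<n}" using W(1) c1 c2 c3 c4 by auto
  ultimately show ?case
    using far_permutation_add_4cycle[OF s c1(2) c2(2) c3(2) c4(2) c2(3) c3(3) c4(3)] by blast
qed

lemma far_permutation_insert_vertex:
  assumes sg: "simple_graph n E" and deg: "\<forall>v<n. degree E v \<le> d"
    and s: "far_permutation E W s" and W: "W \<subseteq> {..<n}"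
    and big: "2 * (1 + d + d * d) + 2 * d < card W" and x: "x < n" "x \<notin> W"
  obtains s' where "far_permutation E (insert x W) s'"
proof -
  let ?D = "1 + d + d * d"
  have sW: "s ` W \<subseteq> W" and inj: "inj_on s W" using s unfolding far_permutation_def by auto
  have fin_W: "finite W" using W finite_subset by blast
  have fin_nb: "finite (neighbours E x)" by (rule finite_neighbours[OF sg])
  have card_nb: "card (neighbours E x) \<le> d" using deg x card_neighbours[OF sg] by simp
  have fin_ball: "finite (ball2 E x)" by (rule finite_ball2[OF sg])
  have card_ball: "card (ball2 E x) \<le> ?D" by (rule card_ball2_le[OF sg deg x(1)])
  define B1 where "B1 = {a\<in>W. x \<in> ball2 E a}"
  define B2 where "B2 = {a\<in>W. s a \<in> ball2 E x}"
  define B3 where "B3 = {a\<in>W. \<exists>b\<in>W. s b = a \<and> {b, x} \<in> E}"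
  define B4 where "B4 = {a\<in>W. s (s a) \<in> neighbours E x}"
  have "B1 \<subseteq> ball2 E x" unfolding B1_def using ball2_sym by blast
  then have "card B1 \<le> ?D" using card_mono[OF fin_ball] card_ball by (meson le_trans)
  moreover have "card B2 \<le> card (ball2 E x)"
    using inj fin_ball by (intro card_inj_on_le[of s]) (auto simp: B2_def intro: inj_on_subset)
  moreover have "B3 \<subseteq> s ` neighbours E x"
    unfolding B3_def neighbours_def by (auto simp: insert_commute)
  then have "card B3 \<le> card (neighbours E x)"
    using fin_nb by (meson card_image_le card_mono finite_imageI le_trans)
  moreover have "inj_on (s \<circ> s) W" using inj sW by (auto intro: comp_inj_on inj_on_subset)
  then have "card B4 \<le> card (neighbours E x)"
    using fin_nb by (intro card_inj_on_le[of "s \<circ> s"]) (auto simp: B4_def intro: inj_on_subset)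
  ultimately have "card B1 + card B2 + card B3 + card B4 < card W"
    using big card_nb card_ball unfolding mult_2 by linarith
  moreover have "card (B1 \<union> B2 \<union> B3 \<union> B4) \<le> card B1 + card B2 + card B3 + card B4"
    by (meson add_le_mono card_Un_le le_trans order_refl)
  moreover have "finite (B1 \<union> B2 \<union> B3 \<union> B4)" using fin_W by (simp add: B1_def B2_def B3_def B4_def)
  ultimately have "\<not> W \<subseteq> B1 \<union> B2 \<union> B3 \<union> B4" using card_mono by (metis le_trans not_le)
  then obtain a where a: "a \<in> W" "a \<notin> B1" "a \<notin> B2" "a \<notin> B3" "a \<notin> B4" by blast
  have "far_permutation E (insert x W) (s(a := x, x := s a))"
    by (rule far_permutation_insert[OF s x(2) a(1)])
       (use a in \<open>auto simp: B1_def B2_def B3_def B4_def neighbours_def\<close>)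
  then show ?thesis by (rule that)
qed

lemma far_permutation_extend:
  assumes sg: "simple_graph n E" and deg: "\<forall>v<n. degree E v \<le> d"
  shows "far_permutation E W s \<Longrightarrow> W \<subseteq> {..<n} \<Longrightarrow> 2 * (1 + d + d * d) + 2 * d < card W \<Longrightarrow>
    \<exists>s'. far_permutation E {..<n} s'"
proof (induction "n - card W" arbitrary: W s)
  case 0
  then have "W = {..<n}" by (intro card_seteq) auto
  then show ?case using 0 by blast
next
  case (Suc k)
  then have "W \<noteq> {..<n}" by force
  then obtain x where x: "x < n" "x \<notin> W" using Suc.prems(2) by blast
  obtain s' where "far_permutation E (insert x W) s'"
    using far_permutation_insert_vertex[OF sg deg Suc.prems x] .
  moreover have "card (insert x W) = Suc (card W)"
    using x(2) Suc.prems(2) finite_subset[OF _ finite_lessThan] by simp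
  ultimately show ?case using Suc x by (intro Suc.hyps(1)[of "insert x W" s']) auto
qed

lemma far_permutation_exists:
  assumes sg: "simple_graph n E" and deg: "\<forall>v<n. degree E v \<le> d"
    and n: "5 * (1 + d + d * d) + 2 * d + 4 < n"
  obtains s where "far_permutation E {..<n} s"
proof -
  let ?X = "2 * (1 + d + d * d) + 2 * d"
  define q where "q = ?X div 4 + 1"
  have "\<forall>X::nat. X < 4 * (X div 4 + 1) \<and> 4 * (X div 4 + 1) \<le> X + 4" by presburger
  then have q: "?X < 4 * q" "4 * q \<le> ?X + 4" unfolding q_def by blast+
  then obtain W s where "far_permutation E W s" "W \<subseteq> {..<n}" "card W = 4 * q"
    using far_permutation_of_4cycles[OF sg deg, of q] n by auto
  then show ?thesis using far_permutation_extend[OF sg deg] q that by metis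
qed

section \<open>The lower bound\<close>

definition cycle_edges :: "nat \<Rightarrow> (nat \<Rightarrow> nat) \<Rightarrow> nat set set" where
  "cycle_edges n s = (\<lambda>x. {x, s x}) ` {..<n}"

context
  fixes E n s
  assumes far: "far_permutation E {..<n} s"
begin

lemma far_permutationD:
  assumes "x < n"
  shows "s x < n" "s (s x) \<noteq> x" "s (s (s x)) \<noteq> x" "s x \<notin> ball2 E x" "{x, s (s x)} \<notin> E"
  using far assms unfolding far_permutation_def by auto

lemma far_permutation_inj: "x < n \<Longrightarrow> y < n \<Longrightarrow> s x = s y \<Longrightarrow> x = y"
  using far unfolding far_permutation_def by (auto dest: inj_onD)

lemma far_permutation_surj: "y < n \<Longrightarrow> \<exists>x<n. s x = y"
proof -
  have "s ` {..<n} = {..<n}"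
    using far unfolding far_permutation_def by (intro endo_inj_surj) auto
  then show "y < n \<Longrightarrow> \<exists>x<n. s x = y" by (metis imageE lessThan_iff)
qed

lemma mem_cycle_edges_iff: "{u, v} \<in> cycle_edges n s \<longleftrightarrow> (u < n \<and> v = s u) \<or> (v < n \<and> u = s v)"
  unfolding cycle_edges_def by (auto simp: doubleton_eq_iff)

lemma cycle_edge_far:
  assumes "{u, v} \<in> cycle_edges n s"
  shows "v \<notin> ball2 E u"
proof -
  consider "u < n" "v = s u" | "v < n" "u = s v" using assms unfolding mem_cycle_edges_iff by blast
  then show ?thesis by cases (use far_permutationD(4) ball2_sym in auto)
qed

lemma simple_graph_cycle_edges: "simple_graph n (cycle_edges n s)"
  unfolding simple_graph_def
proof
  fix e assume "e \<in> cycle_edges n s"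
  then obtain x where x: "x < n" "e = {x, s x}" unfolding cycle_edges_def by blast
  moreover have "s x \<noteq> x" using far_permutationD(4)[OF x(1)] self_in_ball2 by metis
  ultimately show "e \<subseteq> {0..<n} \<and> card e = 2" using far_permutationD(1) by auto
qed

lemma cycle_edges_disjoint: "E \<inter> cycle_edges n s = {}"
proof -
  have "{x, s x} \<notin> E" if "x < n" for x
    using far_permutationD(4)[OF that] neighbour_in_ball2 by blast
  then show ?thesis unfolding cycle_edges_def by auto
qed

lemma degree_cycle_edges:
  assumes x: "x < n"
  shows "degree (cycle_edges n s) x = 2"
proof -
  obtain z where z: "z < n" "s z = x" using far_permutation_surj[OF x] by blast
  have "{e \<in> cycle_edges n s. x \<in> e} = {{x, s x}, {z, x}}"
  proof (intro equalityI subsetI)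
    fix e assume "e \<in> {e \<in> cycle_edges n s. x \<in> e}"
    then obtain y where y: "y < n" "e = {y, s y}" "x = y \<or> x = s y" unfolding cycle_edges_def by blast
    then have "y = x \<or> y = z" using z far_permutation_inj by metis
    then show "e \<in> {{x, s x}, {z, x}}" using y z by auto
  next
    fix e assume "e \<in> {{x, s x}, {z, x}}"
    then show "e \<in> {e \<in> cycle_edges n s. x \<in> e}" unfolding cycle_edges_def using x z by auto
  qed
  moreover have "{x, s x} \<noteq> {z, x}"
    using far_permutationD(2,4)[OF z(1)] z(2) self_in_ball2 by (auto simp: doubleton_eq_iff)
  ultimately show ?thesis unfolding degree_def by simp
qed

text \<open>Two cycle edges \<open>{u, v}\<close>, \<open>{v, w}\<close> are consecutive on a cycle of length at least 4, so
  \<open>{u, w} = {z, s (s z)}\<close> for some \<open>z\<close>.\<close>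
lemma cycle_edges_path2_not_edge:
  assumes uv: "{u, v} \<in> cycle_edges n s" and vw: "{v, w} \<in> cycle_edges n s" and "u \<noteq> w"
  shows "{u, w} \<notin> E \<union> cycle_edges n s"
proof -
  obtain z where z: "z < n" "{u, w} = {z, s (s z)}"
  proof -
    consider "u < n" "v = s u" | "v < n" "u = s v"
      using uv unfolding mem_cycle_edges_iff by blast
    moreover consider "v < n" "w = s v" | "w < n" "v = s w"
      using vw unfolding mem_cycle_edges_iff by blast
    ultimately show ?thesis
      using that \<open>u \<noteq> w\<close> far_permutation_inj by (metis insert_commute)
  qed
  have "s z \<noteq> z" using far_permutationD(4)[OF z(1)] self_in_ball2 by metis
  then have "s (s z) \<noteq> s z" using z(1) far_permutationD(1) far_permutation_inj by metis
  then have "{z, s (s z)} \<notin> cycle_edges n s"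
    using far_permutationD(3)[OF z(1)] unfolding mem_cycle_edges_iff by metis
  then show ?thesis using z far_permutationD(5) by auto
qed

lemma cycle_edge_no_triangle:
  assumes xy: "{x, y} \<in> cycle_edges n s" and xw: "{x, w} \<in> E \<union> cycle_edges n s"
    and yw: "{y, w} \<in> E \<union> cycle_edges n s" and "w \<noteq> x" "w \<noteq> y" "x \<noteq> y"
  shows False
proof -
  have yx: "{y, x} \<in> cycle_edges n s" using xy by (simp add: insert_commute)
  consider "{x, w} \<in> cycle_edges n s" | "{y, w} \<in> cycle_edges n s" | "{x, w} \<in> E" "{w, y} \<in> E"
    using xw yw by (auto simp: insert_commute)
  then show False
  proof cases
    case 1 then show False using cycle_edges_path2_not_edge[OF yx] yw \<open>w \<noteq> y\<close> by blast
  next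
    case 2 then show False using cycle_edges_path2_not_edge[OF xy] xw \<open>w \<noteq> x\<close> by blast
  next
    case 3 then show False using cycle_edge_far[OF xy] by (auto simp: mem_ball2_iff)
  qed
qed

end

lemma contains_clique_Un_no_triangle:
  assumes clique: "contains_clique n (E \<union> A) r" and r: "3 \<le> r"
    and no_triangle: "\<And>x y w. {x, y} \<in> A \<Longrightarrow> {x, w} \<in> E \<union> A \<Longrightarrow> {y, w} \<in> E \<union> A \<Longrightarrow>
      w \<noteq> x \<Longrightarrow> w \<noteq> y \<Longrightarrow> x \<noteq> y \<Longrightarrow> False"
  shows "contains_clique n E r"
proof -
  obtain S where S: "S \<subseteq> {0..<n}" "card S = r"
    and edges: "\<forall>x\<in>S. \<forall>y\<in>S. x \<noteq> y \<longrightarrow> {x, y} \<in> E \<union> A"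
    using clique unfolding contains_clique_def by blast
  have "{x, y} \<in> E" if "x \<in> S" "y \<in> S" "x \<noteq> y" for x y
  proof (rule ccontr)
    assume "{x, y} \<notin> E"
    then have "{x, y} \<in> A" using edges that by blast
    moreover obtain w where "w \<in> S" "w \<noteq> x" "w \<noteq> y"
    proof -
      have "card {x, y} < card S" using S r by (simp add: card_insert_if)
      then have "\<not> S \<subseteq> {x, y}" using card_mono[of "{x, y}" S] by auto
      then show ?thesis using that by blast
    qed
    ultimately show False using no_triangle edges that by metis
  qed
  then show ?thesis unfolding contains_clique_def using S by blast
qed

lemma rrsat_graph_order_le:
  assumes rr: "rrsat_graph n r E" and r: "3 \<le> r" and reg: "\<forall>v<n. degree E v = d"
  shows "n \<le> 5 * (1 + d + d * d) + 2 * d + 4"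
proof (rule ccontr)
  assume "\<not> ?thesis"
  then have big: "5 * (1 + d + d * d) + 2 * d + 4 < n" by simp
  have sg: "simple_graph n E" and no_clique: "\<not> contains_clique n E r"
    and saturated: "\<And>E'. regular_graph n E' \<Longrightarrow> E \<subset> E' \<Longrightarrow> contains_clique n E' r"
    using rr unfolding rrsat_graph_def regular_graph_def by auto
  obtain s where far: "far_permutation E {..<n} s"
    using far_permutation_exists[OF sg _ big] reg by (metis order_refl)
  let ?A = "cycle_edges n s"
  have sg_A: "simple_graph n ?A" by (rule simple_graph_cycle_edges[OF far])
  have "simple_graph n (E \<union> ?A)" using sg sg_A unfolding simple_graph_def by blast
  moreover have "degree (E \<union> ?A) v = d + 2" if "v < n" for v
    using degree_Un_disjoint[OF finite_simple_graph[OF sg] finite_simple_graph[OF sg_A]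
        cycle_edges_disjoint[OF far]] reg degree_cycle_edges[OF far that] that
    by simp
  ultimately have "regular_graph n (E \<union> ?A)" unfolding regular_graph_def by blast
  moreover have "E \<subset> E \<union> ?A"
  proof -
    have "{0, s 0} \<in> ?A" using big unfolding cycle_edges_def by auto
    then show ?thesis using cycle_edges_disjoint[OF far] by blast
  qed
  ultimately have "contains_clique n (E \<union> ?A) r" by (rule saturated)
  then have "contains_clique n E r"
    using r cycle_edge_no_triangle[OF far] by (rule contains_clique_Un_no_triangle)
  then show False using no_clique by blast
qed

lemma rrsat_graph_card_ge:
  assumes rr: "rrsat_graph n r E" and r: "3 \<le> r" and n: "10 \<le> n"
  shows "real n * sqrt (real n) \<le> 10 * real (card E)"
proof -
  obtain d where sg: "simple_graph n E" and reg: "\<forall>v<n. degree E v = d"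
    using rr unfolding rrsat_graph_def regular_graph_def by blast
  have order: "n \<le> 5 * (1 + d + d * d) + 2 * d + 4" by (rule rrsat_graph_order_le[OF rr r reg])
  then have "1 \<le> d" using n by (cases d) auto
  then have "d \<le> d * d" "1 \<le> d * d" by (simp_all add: mult_le_mono)
  moreover have "5 * (1 + d + d * d) + 2 * d + 4 = 9 + 7 * d + 5 * (d * d)" by simp
  ultimately have "n \<le> 25 * (d * d)" using order by linarith
  then have "real n \<le> (5 * real d)\<^sup>2" by (simp add: power2_eq_square) (metis of_nat_le_iff of_nat_mult of_nat_numeral)
  then have "sqrt (real n) \<le> 5 * real d" by (simp add: real_le_lsqrt)
  then have "real n * sqrt (real n) \<le> real n * (5 * real d)" by (simp add: mult_left_mono)
  also have "\<dots> = 10 * real (card E)"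
    using arg_cong[OF card_edges_regular_graph[OF sg reg], of real] by simp
  finally show ?thesis .
qed

lemma powr_three_halves: "0 \<le> x \<Longrightarrow> x powr (3/2) = x * sqrt x"
  using powr_add[of x 1 "1/2"] by (simp add: powr_half_sqrt)

lemma rrsat_bigomega:
  assumes r: "3 \<le> r"
  shows "(\<lambda>n. real (rrsat n r)) \<in> \<Omega>(\<lambda>n. real n powr (3/2))"
proof (rule landau_omega.bigI[of "1/10"])
  have "real n powr (3/2) / 10 \<le> real (rrsat n r)" if n: "10 \<le> n" for n
  proof -
    have "2 \<le> r" using r by simp
    then obtain E where E: "rrsat_graph n r E" "rrsat n r = card E" by (rule rrsat_attained)
    then show ?thesis using rrsat_graph_card_ge[OF E(1) r n] powr_three_halves[of "real n"] by simp
  qed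
  then show "\<forall>\<^sub>F n in at_top. norm (real (rrsat n r)) \<ge> 1/10 * norm (real n powr (3/2))"
    unfolding eventually_at_top_linorder by auto
qed simp

section \<open>Saturation at a single vertex\<close>

lemma regular_supergraph_new_edge:
  assumes reg: "regular_graph n E" and reg': "regular_graph n E'" and sub: "E \<subset> E'" and v: "v < n"
  obtains u where "u < n" "u \<noteq> v" "{v, u} \<in> E'" "{v, u} \<notin> E"
proof -
  obtain d where d: "\<forall>w<n. degree E w = d" using reg unfolding regular_graph_def by blast
  obtain d' where d': "\<forall>w<n. degree E' w = d'" using reg' unfolding regular_graph_def by blast
  have sg': "simple_graph n E'" using reg' unfolding regular_graph_def by blast
  have fin': "finite E'" by (rule finite_simple_graph[OF sg'])
  obtain e where e: "e \<in> E'" "e \<notin> E" using sub by blast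
  then obtain p q where pq: "e = {p, q}" "p < n" using simple_graph_edgeE[OF sg'] by metis
  have "d < d'"
  proof -
    have "{e\<in>E. p \<in> e} \<subset> {e\<in>E'. p \<in> e}" using sub e pq by auto
    then have "card {e\<in>E. p \<in> e} < card {e\<in>E'. p \<in> e}" using fin' by (simp add: psubset_card_mono)
    then show ?thesis using d d' pq(2) unfolding degree_def by simp
  qed
  then have "{e\<in>E'. v \<in> e} \<noteq> {e\<in>E. v \<in> e}" using d d' v unfolding degree_def by force
  then obtain e' where e': "e' \<in> E'" "e' \<notin> E" "v \<in> e'" using sub by blast
  obtain a b where ab: "e' = {a, b}" "a \<noteq> b" "a < n" "b < n" by (rule simple_graph_edgeE[OF sg' e'(1)])
  show ?thesis
    by (rule that[of "if a = v then b else a"]) (use ab e' in \<open>auto simp: insert_commute\<close>)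
qed

lemma rrsat_graph_if_saturated_at:
  assumes reg: "regular_graph n E" and free: "\<not> contains_clique n E r" and v: "v < n"
    and saturated: "\<And>u. u < n \<Longrightarrow> u \<noteq> v \<Longrightarrow> {v, u} \<notin> E \<Longrightarrow> contains_clique n (insert {v, u} E) r"
  shows "rrsat_graph n r E"
  unfolding rrsat_graph_def
proof (intro conjI reg free allI impI)
  fix E' assume "regular_graph n E' \<and> E \<subset> E'"
  then obtain u where "u < n" "u \<noteq> v" "{v, u} \<in> E'" "{v, u} \<notin> E"
    using regular_supergraph_new_edge[OF reg _ _ v] by blast
  then show "contains_clique n E' r"
    using saturated contains_clique_mono \<open>regular_graph n E' \<and> E \<subset> E'\<close> by blast
qed

definition relabel :: "('a \<Rightarrow> nat) \<Rightarrow> 'a set \<Rightarrow> ('a \<Rightarrow> 'a \<Rightarrow> bool) \<Rightarrow> nat set set" where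
  "relabel g X adj = {{g x, g y} | x y. x \<in> X \<and> y \<in> X \<and> adj x y}"

lemma contains_clique_image:
  assumes "inj_on g S" "g ` S \<subseteq> {0..<n}" "card S = r"
    and "\<forall>x\<in>S. \<forall>y\<in>S. x \<noteq> y \<longrightarrow> {g x, g y} \<in> E"
  shows "contains_clique n E r"
  unfolding contains_clique_def
  using assms by (intro exI[of _ "g ` S"]) (auto simp: card_image inj_on_eq_iff)

context
  fixes g :: "'a \<Rightarrow> nat" and X :: "'a set" and adj :: "'a \<Rightarrow> 'a \<Rightarrow> bool"
  assumes bij: "bij_betw g X {0..<card X}"
    and sym: "symp adj" and irrefl: "\<And>x. \<not> adj x x"
begin

lemma relabel_edge_iff:
  assumes "x \<in> X" "y \<in> X"
  shows "{g x, g y} \<in> relabel g X adj \<longleftrightarrow> adj x y"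
proof
  assume "{g x, g y} \<in> relabel g X adj"
  then obtain a b where "{g x, g y} = {g a, g b}" "a \<in> X" "b \<in> X" "adj a b"
    unfolding relabel_def by blast
  then show "adj x y"
    using assms bij sympD[OF sym] unfolding bij_betw_def by (auto simp: doubleton_eq_iff inj_on_eq_iff)
qed (use assms in \<open>auto simp: relabel_def\<close>)

lemma relabel_edgeE:
  assumes "e \<in> relabel g X adj"
  obtains x y where "e = {g x, g y}" "x \<in> X" "y \<in> X" "adj x y"
  using assms unfolding relabel_def by blast

lemma simple_graph_relabel: "simple_graph (card X) (relabel g X adj)"
  unfolding simple_graph_def
proof
  fix e assume "e \<in> relabel g X adj"
  then obtain x y where "e = {g x, g y}" "x \<in> X" "y \<in> X" "adj x y" by (rule relabel_edgeE)
  moreover have "g x \<noteq> g y" using bij irrefl calculation unfolding bij_betw_def by (metis inj_onD)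
  ultimately show "e \<subseteq> {0..<card X} \<and> card e = 2" using bij by (auto dest: bij_betw_apply)
qed

lemma degree_relabel:
  assumes x: "x \<in> X"
  shows "degree (relabel g X adj) (g x) = card {y\<in>X. adj x y}"
proof -
  have inj: "inj_on g X" using bij by (rule bij_betw_imp_inj_on)
  have "{e \<in> relabel g X adj. g x \<in> e} = (\<lambda>y. {g x, g y}) ` {y\<in>X. adj x y}"
  proof (intro equalityI subsetI)
    fix e assume "e \<in> {e \<in> relabel g X adj. g x \<in> e}"
    then obtain a b where "e = {g a, g b}" "a \<in> X" "b \<in> X" "adj a b" "g x \<in> e"
      by (blast elim: relabel_edgeE)
    then show "e \<in> (\<lambda>y. {g x, g y}) ` {y\<in>X. adj x y}"
      using x inj sympD[OF sym] by (auto simp: inj_on_eq_iff insert_commute)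
  next
    fix e assume "e \<in> (\<lambda>y. {g x, g y}) ` {y\<in>X. adj x y}"
    then show "e \<in> {e \<in> relabel g X adj. g x \<in> e}" unfolding relabel_def using x by blast
  qed
  moreover have "inj_on (\<lambda>y. {g x, g y}) {y\<in>X. adj x y}"
    using inj x by (auto intro!: inj_onI simp: doubleton_eq_iff inj_on_eq_iff)
  ultimately show ?thesis unfolding degree_def by (simp add: card_image)
qed

lemma degree_relabel_const:
  assumes "\<And>x. x \<in> X \<Longrightarrow> card {y\<in>X. adj x y} = d" and "v < card X"
  shows "degree (relabel g X adj) v = d"
proof -
  have "v \<in> g ` X" using bij_betw_imp_surj_on[OF bij] assms(2) by simp
  then obtain x where "x \<in> X" "v = g x" by blast
  then show ?thesis using degree_relabel assms(1) by simp
qed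

lemma contains_clique_relabelD:
  assumes "contains_clique (card X) (relabel g X adj) r"
  obtains S where "S \<subseteq> X" "card S = r" "\<forall>x\<in>S. \<forall>y\<in>S. x \<noteq> y \<longrightarrow> adj x y"
proof -
  obtain S' where S': "S' \<subseteq> {0..<card X}" "card S' = r"
    and edges: "\<forall>p\<in>S'. \<forall>q\<in>S'. p \<noteq> q \<longrightarrow> {p, q} \<in> relabel g X adj"
    using assms unfolding contains_clique_def by blast
  let ?h = "inv_into X g"
  have h: "bij_betw ?h {0..<card X} X" by (rule bij_betw_inv_into[OF bij])
  have g_h: "p \<in> {0..<card X} \<Longrightarrow> g (?h p) = p" for p using bij by (simp add: bij_betw_inv_into_right)
  have "inj_on ?h S'" using h S'(1) by (meson bij_betw_imp_inj_on inj_on_subset)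
  moreover have "?h ` S' \<subseteq> X" using h S'(1) by (auto dest: bij_betw_apply)
  moreover have "adj (?h p) (?h q)" if "p \<in> S'" "q \<in> S'" "p \<noteq> q" for p q
  proof -
    have "p \<in> {0..<card X}" "q \<in> {0..<card X}" using that S'(1) by blast+
    then have "?h p \<in> X" "?h q \<in> X" "{g (?h p), g (?h q)} = {p, q}"
      using h g_h by (auto dest: bij_betw_apply)
    then show ?thesis using edges that relabel_edge_iff by metis
  qed
  ultimately show ?thesis using that S'(2) by (auto simp: card_image inj_on_eq_iff)
qed


lemma rrsat_graph_relabel:
  assumes deg: "\<And>x. x \<in> X \<Longrightarrow> card {y\<in>X. adj x y} = d"
    and free: "\<And>S. S \<subseteq> X \<Longrightarrow> \<forall>x\<in>S. \<forall>y\<in>S. x \<noteq> y \<longrightarrow> adj x y \<Longrightarrow> card S \<noteq> r"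
    and v: "v \<in> X"
    and saturated: "\<And>u. u \<in> X \<Longrightarrow> u \<noteq> v \<Longrightarrow> \<not> adj v u \<Longrightarrow>
      \<exists>S\<subseteq>X. card S = r \<and> (\<forall>x\<in>S. \<forall>y\<in>S. x \<noteq> y \<longrightarrow> adj x y \<or> {x, y} = {v, u})"
  shows "rrsat_graph (card X) r (relabel g X adj)"
proof (rule rrsat_graph_if_saturated_at)
  show "regular_graph (card X) (relabel g X adj)"
    unfolding regular_graph_def using simple_graph_relabel degree_relabel_const[OF deg] by blast
  show "\<not> contains_clique (card X) (relabel g X adj) r"
  proof
    assume "contains_clique (card X) (relabel g X adj) r"
    then obtain S where "S \<subseteq> X" "card S = r" "\<forall>x\<in>S. \<forall>y\<in>S. x \<noteq> y \<longrightarrow> adj x y"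
      using contains_clique_relabelD by blast
    then show False using free by blast
  qed
  show "g v < card X" using bij v by (auto dest: bij_betw_apply)
  fix p assume p: "p < card X" "p \<noteq> g v" "{g v, p} \<notin> relabel g X adj"
  have "p \<in> g ` X" using bij_betw_imp_surj_on[OF bij] p(1) by simp
  then obtain u where u: "u \<in> X" "p = g u" by blast
  have "u \<noteq> v" using p(2) u(2) by blast
  moreover have "\<not> adj v u" using p(3) u(2) relabel_edge_iff[OF v u(1)] by simp
  ultimately obtain S where S: "S \<subseteq> X" "card S = r"
    and edges: "\<forall>x\<in>S. \<forall>y\<in>S. x \<noteq> y \<longrightarrow> adj x y \<or> {x, y} = {v, u}"
    using saturated[OF u(1)] by blast
  have "inj_on g S" using bij_betw_imp_inj_on[OF bij] S(1) by (rule inj_on_subset)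
  moreover have "g ` S \<subseteq> {0..<card X}" using bij_betw_imp_surj_on[OF bij] S(1) by blast
  moreover have "\<forall>x\<in>S. \<forall>y\<in>S. x \<noteq> y \<longrightarrow> {g x, g y} \<in> insert {g v, p} (relabel g X adj)"
  proof (intro ballI impI)
    fix x y assume xy: "x \<in> S" "y \<in> S" "x \<noteq> y"
    then consider "adj x y" | "{x, y} = {v, u}" using edges by blast
    then show "{g x, g y} \<in> insert {g v, p} (relabel g X adj)"
    proof cases
      case 1 then show ?thesis using relabel_edge_iff[of x y] xy S(1) by blast
    next
      case 2
      then have "g ` {x, y} = g ` {v, u}" by (rule arg_cong)
      then show ?thesis using u(2) by simp
    qed
  qed
  ultimately show "contains_clique (card X) (insert {g v, p} (relabel g X adj)) r"
    by (rule contains_clique_image[OF _ _ S(2)])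
qed

end

section \<open>The upper bound construction\<close>

text \<open>\<open>Qv k i\<close> is the \<open>i\<close>-th vertex of \<open>Q\<^sub>k\<close> and \<open>Uv k j\<close> the \<open>j\<close>-th vertex of \<open>U\<^sub>k\<close>; \<open>U\<^sub>k\<close> is
  joined to \<open>U\<^bsub>mate k\<^esub>\<close>.\<close>
datatype hub_vertex = Hub | Qv nat nat | Uv nat nat

definition mate :: "nat \<Rightarrow> nat" where
  "mate k = (if even k then k + 1 else k - 1)"

lemma mate_mate [simp]: "mate (mate k) = k"
  unfolding mate_def by presburger

lemma mate_neq [simp]: "mate k \<noteq> k" "k \<noteq> mate k"
  unfolding mate_def by presburger+

lemma mate_less: "even m \<Longrightarrow> k < m \<Longrightarrow> mate k < m"
  unfolding mate_def by presburger

fun hub_adj :: "hub_vertex \<Rightarrow> hub_vertex \<Rightarrow> bool" where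
  "hub_adj Hub (Qv k i) = True"
| "hub_adj (Qv k i) Hub = True"
| "hub_adj (Qv k i) (Qv k' i') = (k = k' \<and> i \<noteq> i')"
| "hub_adj (Qv k i) (Uv k' j) = (k = k')"
| "hub_adj (Uv k j) (Qv k' i) = (k = k')"
| "hub_adj (Uv k j) (Uv k' j') = (k' = mate k)"
| "hub_adj _ _ = False"

lemma symp_hub_adj: "symp hub_adj"
proof (rule sympI)
  fix x y assume "hub_adj x y"
  then show "hub_adj y x" by (cases x; cases y) auto
qed

lemma hub_adj_irrefl: "\<not> hub_adj x x"
  by (cases x) auto

definition hub_vertices :: "nat \<Rightarrow> nat \<Rightarrow> hub_vertex set" where
  "hub_vertices m t = insert Hub ((\<lambda>(k, i). Qv k i) ` ({..<m} \<times> {..<t}) \<union>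
     (\<lambda>(k, j). Uv k j) ` ({..<m} \<times> {..<t * (m - 1)}))"

lemma mem_hub_vertices [simp]:
  "Hub \<in> hub_vertices m t"
  "Qv k i \<in> hub_vertices m t \<longleftrightarrow> k < m \<and> i < t"
  "Uv k j \<in> hub_vertices m t \<longleftrightarrow> k < m \<and> j < t * (m - 1)"
  unfolding hub_vertices_def by auto

lemma finite_hub_vertices: "finite (hub_vertices m t)"
  unfolding hub_vertices_def by simp

lemma card_hub_vertices:
  assumes "1 \<le> m"
  shows "card (hub_vertices m t) = 1 + t * m * m"
proof -
  let ?Q = "(\<lambda>(k, i). Qv k i) ` ({..<m} \<times> {..<t})"
  let ?U = "(\<lambda>(k, j). Uv k j) ` ({..<m} \<times> {..<t * (m - 1)})"
  have "card ?Q = m * t" "card ?U = m * (t * (m - 1))"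
    by (subst card_image; auto simp: inj_on_def)+
  moreover have "card (?Q \<union> ?U) = card ?Q + card ?U" by (rule card_Un_disjoint) auto
  moreover have "m * t + m * (t * (m - 1)) = t * m * m"
    using assms by (cases m) (auto simp: algebra_simps)
  ultimately show ?thesis unfolding hub_vertices_def by (subst card_insert_disjoint) auto
qed

lemma card_hub_adj:
  assumes m: "even m" "1 \<le> m" and x: "x \<in> hub_vertices m t"
  shows "card {y \<in> hub_vertices m t. hub_adj x y} = t * m"
proof -
  have tm: "t + t * (m - 1) = t * m" using m by (cases m) auto
  have card_Q: "card (Qv k ` A) = card A" and card_U: "card (Uv k ` A) = card A" for k A
    by (simp_all add: card_image inj_on_def)
  show ?thesis
  proof (cases x)
    case Hub
    have "{y \<in> hub_vertices m t. hub_adj x y} = (\<lambda>(k, i). Qv k i) ` ({..<m} \<times> {..<t})"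
      unfolding Hub hub_vertices_def by auto
    then show ?thesis by (simp add: card_image inj_on_def)
  next
    case (Qv k i)
    then have "{y \<in> hub_vertices m t. hub_adj x y} =
        insert Hub (Qv k ` ({..<t} - {i}) \<union> Uv k ` {..<t * (m - 1)})"
      using x unfolding hub_vertices_def by auto
    moreover have "card (insert Hub (Qv k ` ({..<t} - {i}) \<union> Uv k ` {..<t * (m - 1)})) =
        1 + (t - 1) + t * (m - 1)"
    proof -
      have "card (Qv k ` ({..<t} - {i}) \<union> Uv k ` {..<t * (m - 1)}) = (t - 1) + t * (m - 1)"
        using x Qv by (subst card_Un_disjoint) (auto simp: card_Q card_U)
      then show ?thesis by (subst card_insert_disjoint) auto
    qed
    ultimately show ?thesis using tm x Qv by simp
  next
    case (Uv k j)
    then have "{y \<in> hub_vertices m t. hub_adj x y} = Qv k ` {..<t} \<union> Uv (mate k) ` {..<t * (m - 1)}"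
      using x mate_less[OF m(1)] unfolding hub_vertices_def by auto
    moreover have "card (Qv k ` {..<t} \<union> Uv (mate k) ` {..<t * (m - 1)}) = t + t * (m - 1)"
      by (subst card_Un_disjoint) (auto simp: card_Q card_U)
    ultimately show ?thesis using tm by simp
  qed
qed

lemma card_hub_clique_le:
  assumes t: "1 \<le> t" and S: "S \<subseteq> hub_vertices m t"
    and clique: "\<forall>x\<in>S. \<forall>y\<in>S. x \<noteq> y \<longrightarrow> hub_adj x y"
  shows "card S \<le> t + 1"
proof (cases "\<exists>k j k' j'. Uv k j \<in> S \<and> Uv k' j' \<in> S \<and> Uv k j \<noteq> Uv k' j'")
  case True
  then obtain k j k' j' where u: "Uv k j \<in> S" "Uv k' j' \<in> S" "Uv k j \<noteq> Uv k' j'" by blast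
  have "S \<subseteq> {Uv k j, Uv k' j'}"
  proof
    fix z assume z: "z \<in> S"
    show "z \<in> {Uv k j, Uv k' j'}"
    proof (rule ccontr)
      assume "z \<notin> {Uv k j, Uv k' j'}"
      then have adj: "hub_adj (Uv k j) z" "hub_adj (Uv k' j') z" "hub_adj (Uv k j) (Uv k' j')"
        using clique[rule_format, OF u(1) z] clique[rule_format, OF u(2) z]
          clique[rule_format, OF u(1) u(2) u(3)] by auto
      show False
      proof (cases z)
        case (Uv k2 j2)
        then have "k2 = mate k" "k2 = mate k'" "k' = mate k" using adj by simp_all
        then show False by (metis mate_mate mate_neq(1))
      qed (use adj in simp_all)
    qed
  qed
  then have "card S \<le> card {Uv k j, Uv k' j'}" by (rule card_mono[rotated]) simp
  also have "\<dots> \<le> 2" by (simp add: card_insert_if)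
  finally show ?thesis using t by simp
next
  case at_most_one_U: False
  have "\<exists>z k. S \<subseteq> insert z (Qv k ` {..<t})"
  proof (cases "\<exists>k j. Uv k j \<in> S")
    case True
    then obtain k j where u: "Uv k j \<in> S" by blast
    have "S \<subseteq> insert (Uv k j) (Qv k ` {..<t})"
    proof
      fix z assume z: "z \<in> S"
      show "z \<in> insert (Uv k j) (Qv k ` {..<t})"
      proof (cases "z = Uv k j")
        case False
        then have adj: "hub_adj (Uv k j) z" using clique[rule_format, OF u z] by simp
        show ?thesis
        proof (cases z)
          case (Uv k2 j2)
          then show ?thesis using at_most_one_U u z \<open>z \<noteq> Uv k j\<close> by blast
        qed (use adj z S in auto)
      qed simp
    qed
    then show ?thesis by blast
  next
    case no_U: False
    show ?thesis
    proof (cases "\<exists>k i. Qv k i \<in> S")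
      case True
      then obtain k i where q: "Qv k i \<in> S" by blast
      have "S \<subseteq> insert Hub (Qv k ` {..<t})"
      proof
        fix z assume z: "z \<in> S"
        show "z \<in> insert Hub (Qv k ` {..<t})"
        proof (cases "z = Qv k i")
          case False
          then have "hub_adj (Qv k i) z" using clique[rule_format, OF q z] by simp
          then show ?thesis using z S no_U by (cases z) auto
        qed (use q S in auto)
      qed
      then show ?thesis by blast
    next
      case False
      have "S \<subseteq> {Hub}"
      proof
        fix z assume "z \<in> S"
        then show "z \<in> {Hub}" using False no_U by (cases z) auto
      qed
      then show ?thesis by blast
    qed
  qed
  then obtain z k where "S \<subseteq> insert z (Qv k ` {..<t})" by blast
  then have "card S \<le> card (insert z (Qv k ` {..<t}))" by (rule card_mono[rotated]) simp
  also have "\<dots> \<le> t + 1" using card_insert_le_m1 by (simp add: card_insert_if card_image inj_on_def)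
  finally show ?thesis .
qed

lemma rrsat_graph_hub_graph:
  assumes t: "1 \<le> t" and m: "even m" "1 \<le> m"
  obtains E where "rrsat_graph (1 + t * m * m) (t + 2) E" "2 * card E = (1 + t * m * m) * (t * m)"
proof -
  let ?X = "hub_vertices m t"
  obtain g where bij: "bij_betw g ?X {0..<card ?X}"
    using ex_bij_betw_finite_nat[OF finite_hub_vertices] by (metis atLeast0LessThan)
  note relabel = simple_graph_relabel[OF bij symp_hub_adj hub_adj_irrefl]
    degree_relabel_const[OF bij symp_hub_adj hub_adj_irrefl]
    rrsat_graph_relabel[OF bij symp_hub_adj hub_adj_irrefl]
  have "rrsat_graph (card ?X) (t + 2) (relabel g ?X hub_adj)"
  proof (rule relabel(3))
    show "card {y \<in> ?X. hub_adj x y} = t * m" if "x \<in> ?X" for x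
      using card_hub_adj[OF m that] .
    show "card S \<noteq> t + 2" if "S \<subseteq> ?X" "\<forall>x\<in>S. \<forall>y\<in>S. x \<noteq> y \<longrightarrow> hub_adj x y" for S
      using card_hub_clique_le[OF t that] by simp
    show "Hub \<in> ?X" by simp
    fix u assume u: "u \<in> ?X" "u \<noteq> Hub" "\<not> hub_adj Hub u"
    then obtain k j where kj: "u = Uv k j" "k < m" by (cases u) auto
    let ?S = "insert Hub (insert u (Qv k ` {..<t}))"
    have "?S \<subseteq> ?X" using u kj by auto
    moreover have "card ?S = t + 2"
      using kj by (subst card_insert_disjoint, auto, subst card_insert_disjoint, auto simp: card_image inj_on_def)
    moreover have "\<forall>x\<in>?S. \<forall>y\<in>?S. x \<noteq> y \<longrightarrow> hub_adj x y \<or> {x, y} = {Hub, u}"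
      using kj by (auto simp: doubleton_eq_iff)
    ultimately show "\<exists>S\<subseteq>?X. card S = t + 2 \<and> (\<forall>x\<in>S. \<forall>y\<in>S. x \<noteq> y \<longrightarrow> hub_adj x y \<or> {x, y} = {Hub, u})"
      by blast
  qed
  moreover have "\<forall>p<card ?X. degree (relabel g ?X hub_adj) p = t * m"
    using relabel(2)[OF card_hub_adj[OF m]] by blast
  then have "2 * card (relabel g ?X hub_adj) = card ?X * (t * m)"
    by (rule card_edges_regular_graph[OF relabel(1)])
  ultimately show ?thesis using that card_hub_vertices[OF m(2)] by metis
qed

lemma rrsat_hub_graph_le:
  assumes t: "1 \<le> t" and m: "even m" "1 \<le> m"
  shows "2 * real (rrsat (1 + t * m * m) (t + 2)) \<le> real t * real (1 + t * m * m) powr (3/2)"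
proof -
  let ?N = "1 + t * m * m"
  obtain E where E: "rrsat_graph ?N (t + 2) E" "2 * card E = ?N * (t * m)"
    by (rule rrsat_graph_hub_graph[OF t m])
  have "m * m \<le> ?N" using t by (simp add: le_SucI)
  then have "real m \<le> sqrt (real ?N)"
    by (simp add: real_le_rsqrt power2_eq_square flip: of_nat_mult)
  have "2 * real (rrsat ?N (t + 2)) \<le> 2 * real (card E)" using rrsat_le[OF E(1)] by simp
  also have "\<dots> = real t * (real ?N * real m)" using arg_cong[OF E(2), of real] by (simp add: algebra_simps)
  also have "\<dots> \<le> real t * (real ?N * sqrt (real ?N))"
    using \<open>real m \<le> sqrt (real ?N)\<close> by (simp add: mult_left_mono)
  finally show ?thesis by (simp add: powr_three_halves)
qed

lemma liminf_rrsat_le: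
  assumes t: "1 \<le> t"
  shows "liminf (\<lambda>n. ereal (real (rrsat n (t + 2)) / real n powr (3/2))) \<le> ereal (real t / 2)"
proof -
  define f where "f n = ereal (real (rrsat n (t + 2)) / real n powr (3/2))" for n
  define N where "N a = 1 + t * (2 * a + 2) * (2 * a + 2)" for a :: nat
  have "strict_mono N"
    unfolding strict_mono_Suc_iff N_def using t by (simp add: algebra_simps)
  then have "liminf f \<le> liminf (f \<circ> N)" by (rule liminf_subseq_mono)
  also have "\<dots> \<le> ereal (real t / 2)"
  proof (rule Liminf_le)
    have "(f \<circ> N) a \<le> ereal (real t / 2)" for a
    proof -
      have "0 < N a" unfolding N_def by simp
      then have "0 < real (N a) powr (3/2)" by simp
      then show ?thesis
        using rrsat_hub_graph_le[OF t, of "2 * a + 2"] unfolding f_def N_def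
        by (simp add: divide_le_eq mult.commute)
    qed
    then show "\<forall>\<^sub>F a in sequentially. (f \<circ> N) a \<le> ereal (real t / 2)" by simp
  qed simp
  finally show ?thesis unfolding f_def .
qed

theorem theorem1p4:
  shows "(\<forall>t::nat. t \<ge> 1 \<longrightarrow>
            (\<lambda>n. real (rrsat n (t + 2))) \<in> \<Omega>(\<lambda>n. real n powr (3/2)))
       \<and> (\<forall>t::nat. t \<ge> 1 \<longrightarrow> (\<exists>C::real.
            liminf (\<lambda>n. ereal (real (rrsat n (t + 2)) / real n powr (3/2))) \<le> ereal C))"
  using rrsat_bigomega liminf_rrsat_le by fastforce

end
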